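(* For every integer $s\ge5$, $F_{s,6}(x)=\frac{1}{(s-1)!}\,g_{s,6}(x)\prod_{p=6}^{s}(x-p)$ (an empty product equals $1$), where $g_{s,6}(x)=x^4-(30s-16)x^3+(150s^2-90s+11)x^2-(240s^3-90s^2+4)x+120s^4$.
   Context: For an integer $j\ge0$, $\binom{x}{j}=x(x-1)\cdots(x-j+1)/j!$ as a polynomial in $x$, and $\binom{x}{j}=0$ for $j<0$. For integers $s\ge1$, $k\ge1$, the Moser polynomial is $F_{s,k}(x)=\sum_{p=1}^{s}(-1)^{p-1}p^{k-1}\binom{x}{s-p}$. *)

theory Defs
  imports "HOL-Computational_Algebra.Polynomial"
begin

definition binom_poly :: "int \<Rightarrow> real poly" where
  "binom_poly j = (if j < 0 then 0
     else smult (1 / fact (nat j)) (\<Prod>i<nat j. [:- of_nat i, 1:]))"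

definition moser_poly :: "nat \<Rightarrow> nat \<Rightarrow> real poly" where
  "moser_poly s k = (\<Sum>p=1..s. smult ((-1) ^ (p - 1) * (of_nat p) ^ (k - 1))
                                     (binom_poly (int s - int p)))"

end

theory Submission
  imports Defs
begin

text \<open>Both sides satisfy the Pascal-type recursion f_{s+1}(x + 1) = f_{s+1}(x) + f_s(x) and take
  the value (-1)^{s-1} s^5 at x = 0. For the Moser polynomials this is Pascal's rule for
  binomial coefficients; for the closed form it reduces to the identity
  g_{s+1}(x + 1) (x - 5) = g_{s+1}(x) (x - s - 1) + s g_s(x) between the quartics.
  By induction on s \<ge> 5, the difference of the two sides at s + 1 is then a 1-periodic
  polynomial vanishing at 0, hence zero.\<close>

lemma poly_binom_poly_of_nat: "poly (binom_poly (int k)) x = x gchoose k"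
  by (simp add: binom_poly_def poly_prod gbinomial_prod_rev atLeast0LessThan field_simps)

lemma binom_poly_neg: "j < 0 \<Longrightarrow> binom_poly j = 0"
  by (simp add: binom_poly_def)

lemma poly_binom_poly_shift:
  "poly (binom_poly j) (x + 1) = poly (binom_poly j) x + poly (binom_poly (j - 1)) x"
proof (cases "j \<le> 0")
  case True
  then consider "j < 0" | "j = 0" by linarith
  then show ?thesis
    by cases (simp_all add: binom_poly_neg binom_poly_def)
next
  case False
  define m where "m = nat (j - 1)"
  with False have "j = int (Suc m)" "j - 1 = int m"
    by auto
  then show ?thesis
    by (simp only: poly_binom_poly_of_nat gbinomial_Suc_Suc)
qed

lemma poly_moser_poly:
  "poly (moser_poly s k) x =
     (\<Sum>p=1..s. (-1) ^ (p - 1) * real p ^ (k - 1) * poly (binom_poly (int s - int p)) x)"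
  by (simp add: moser_poly_def poly_sum)

lemma moser_poly_shift:
  "poly (moser_poly (Suc s) k) (x + 1) = poly (moser_poly (Suc s) k) x + poly (moser_poly s k) x"
proof -
  let ?c = "\<lambda>p. (-1) ^ (p - 1) * real p ^ (k - 1) :: real"
  have "poly (moser_poly (Suc s) k) (x + 1) =
      (\<Sum>p=1..Suc s. ?c p * poly (binom_poly (int (Suc s) - int p)) x)
    + (\<Sum>p=1..Suc s. ?c p * poly (binom_poly (int s - int p)) x)"
    unfolding poly_moser_poly sum.distrib[symmetric]
  proof (rule sum.cong[OF refl])
    fix p
    have "int (Suc s) - int p - 1 = int s - int p" by simp
    then show "?c p * poly (binom_poly (int (Suc s) - int p)) (x + 1) =
        ?c p * poly (binom_poly (int (Suc s) - int p)) x + ?c p * poly (binom_poly (int s - int p)) x"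
      by (simp only: poly_binom_poly_shift distrib_left)
  qed
  also have "(\<Sum>p=1..Suc s. ?c p * poly (binom_poly (int s - int p)) x) = poly (moser_poly s k) x"
    by (simp add: poly_moser_poly binom_poly_neg)
  finally show ?thesis
    by (simp add: poly_moser_poly)
qed

lemma moser_poly_at_0:
  assumes "s \<ge> 1"
  shows "poly (moser_poly s k) 0 = (-1) ^ (s - 1) * real s ^ (k - 1)"
proof -
  have "poly (moser_poly s k) 0 = (\<Sum>p=1..s. if p = s then (-1) ^ (s - 1) * real s ^ (k - 1) else 0)"
    unfolding poly_moser_poly
  proof (rule sum.cong[OF refl])
    fix p assume p: "p \<in> {1..s}"
    show "(-1) ^ (p - 1) * real p ^ (k - 1) * poly (binom_poly (int s - int p)) 0 =
        (if p = s then (-1) ^ (s - 1) * real s ^ (k - 1) else 0)"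
    proof (cases "p = s")
      case True
      then show ?thesis by (simp add: binom_poly_def)
    next
      case False
      with p have "int s - int p = int (Suc (s - p - 1))"
        by auto
      then have "poly (binom_poly (int s - int p)) 0 = 0"
        by (simp only: poly_binom_poly_of_nat gbinomial_0_left) simp
      with False show ?thesis
        by simp
    qed
  qed
  then show ?thesis
    using assms by simp
qed

lemma poly_eq_0_if_periodic:
  fixes h :: "'a :: {idom, ring_char_0} poly"
  assumes periodic: "\<And>x. poly h (x + 1) = poly h x" and root: "poly h 0 = 0"
  shows "h = 0"
proof (rule ccontr)
  assume "h \<noteq> 0"
  then have "finite {x. poly h x = 0}"
    by (rule poly_roots_finite)
  moreover have "poly h (of_nat n) = 0" for n
  proof (induction n)
    case (Suc n)
    then show ?case
      using periodic[of "of_nat n"] by (simp add: add.commute)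
  qed (simp add: root)
  then have "range (of_nat :: nat \<Rightarrow> 'a) \<subseteq> {x. poly h x = 0}"
    by auto
  moreover have "infinite (range (of_nat :: nat \<Rightarrow> 'a))"
    by (simp add: range_inj_infinite inj_of_nat)
  ultimately show False
    using finite_subset by blast
qed

definition moser_quartic :: "nat \<Rightarrow> real poly" where
  "moser_quartic s =
     [: 120 * (of_nat s) ^ 4,
        - (240 * (of_nat s) ^ 3 - 90 * (of_nat s) ^ 2 + 4),
        150 * (of_nat s) ^ 2 - 90 * of_nat s + 11,
        - (30 * of_nat s - 16),
        1 :]"

definition moser6_closed_form :: "nat \<Rightarrow> real poly" where
  "moser6_closed_form s =
     smult (1 / fact (s - 1)) (moser_quartic s * (\<Prod>p\<in>{6..s}. [:- of_nat p, 1:]))"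

lemma moser_quartic_shift:
  "poly (moser_quartic (Suc s)) (x + 1) * (x - 5) =
     poly (moser_quartic (Suc s)) x * (x - real (Suc s)) + real s * poly (moser_quartic s) x"
  by (simp add: moser_quartic_def algebra_simps power2_eq_square power3_eq_cube power4_eq_xxxx)

lemma poly_moser6_closed_form:
  "poly (moser6_closed_form s) x =
     poly (moser_quartic s) x * (\<Prod>p\<in>{6..s}. x - real p) / fact (s - 1)"
  by (simp add: moser6_closed_form_def poly_prod)

lemma fact_eq_fact_mult_prod:
  "m \<le> s \<Longrightarrow> fact s = fact m * (\<Prod>p\<in>{Suc m..s}. real p)"
proof (induction s rule: dec_induct)
  case (step n)
  have "{Suc m..Suc n} = insert (Suc n) {Suc m..n}"
    using step.hyps by auto
  then show ?case
    using step.IH by (simp add: algebra_simps)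
qed simp

lemma moser6_closed_form_shift:
  assumes "s \<ge> 5"
  shows "poly (moser6_closed_form (Suc s)) (x + 1) =
    poly (moser6_closed_form (Suc s)) x + poly (moser6_closed_form s) x"
proof -
  define P where "P = (\<Prod>p\<in>{6..s}. x - real p)"
  have "(\<Prod>p\<in>{6..Suc s}. x + 1 - real p) = (\<Prod>p\<in>{5..s}. x - real p)"
    using prod.shift_bounds_cl_Suc_ivl[of "\<lambda>p. x + 1 - real p" 5 s]
    by (simp add: numeral_eq_Suc)
  also have "\<dots> = (x - 5) * P"
    unfolding P_def using assms
    by (subst prod.atLeast_Suc_atMost) (auto simp: numeral_eq_Suc)
  finally have prod_shifted: "(\<Prod>p\<in>{6..Suc s}. x + 1 - real p) = (x - 5) * P" .
  have "{6..Suc s} = insert (Suc s) {6..s}"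
    using assms by auto
  then have prod_Suc: "(\<Prod>p\<in>{6..Suc s}. x - real p) = (x - real (Suc s)) * P"
    unfolding P_def by simp
  have "poly (moser6_closed_form (Suc s)) (x + 1) =
      (poly (moser_quartic (Suc s)) (x + 1) * (x - 5)) * P / fact s"
    by (simp only: poly_moser6_closed_form prod_shifted diff_Suc_1 mult.assoc)
  also have "\<dots> = (poly (moser_quartic (Suc s)) x * (x - real (Suc s))
      + real s * poly (moser_quartic s) x) * P / fact s"
    by (simp only: moser_quartic_shift)
  also have "\<dots> = poly (moser_quartic (Suc s)) x * ((x - real (Suc s)) * P) / fact s
      + poly (moser_quartic s) x * P / fact (s - 1)"
  proof -
    have fact_s: "fact s = real s * fact (s - 1)"
      using assms by (simp add: fact_reduce)
    have "(a * y + real s * b) * P / (real s * G) = a * (y * P) / (real s * G) + b * P / G"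
      if "G \<noteq> 0" for a b y G :: real
      using that assms by (simp add: field_simps)
    then show ?thesis
      unfolding fact_s by simp
  qed
  also have "\<dots> = poly (moser6_closed_form (Suc s)) x + poly (moser6_closed_form s) x"
    unfolding poly_moser6_closed_form prod_Suc diff_Suc_1 P_def[symmetric] ..
  finally show ?thesis .
qed

lemma moser6_closed_form_at_0:
  assumes "s \<ge> 5"
  shows "poly (moser6_closed_form s) 0 = (-1) ^ (s - 1) * real s ^ 5"
proof -
  have "(\<Prod>p\<in>{6..s}. 0 - real p) = (\<Prod>p\<in>{6..s}. -1 * real p)"
    by simp
  also have "\<dots> = (-1) ^ (s - 5) * (\<Prod>p\<in>{6..s}. real p)"
    by (simp only: prod.distrib prod_constant card_atLeastAtMost) simp
  also have "(-1 :: real) ^ (s - 5) = (-1) ^ (s - 1)"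
  proof -
    have "s - 1 = (s - 5) + 4"
      using assms by simp
    then show ?thesis
      by (simp only: power_add) simp
  qed
  also have "120 * (\<Prod>p\<in>{6..s}. real p) = real s * fact (s - 1)"
  proof -
    have "fact s = 120 * (\<Prod>p\<in>{6..s}. real p)"
      using fact_eq_fact_mult_prod[OF assms] by (simp add: fact_numeral)
    moreover have "fact s = real s * fact (s - 1)"
      using assms by (simp add: fact_reduce)
    ultimately show ?thesis
      by simp
  qed
  ultimately have "120 * (\<Prod>p\<in>{6..s}. 0 - real p) = (-1) ^ (s - 1) * real s * fact (s - 1)"
    by (metis mult.left_commute mult.assoc)
  then show ?thesis
    by (simp add: poly_moser6_closed_form moser_quartic_def field_simps eval_nat_numeral)
qed

lemma moser_poly_5_6: "moser_poly 5 6 = moser6_closed_form 5"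
proof (rule poly_ext)
  fix x :: real
  have binom: "poly (binom_poly 4) x = x * (x - 1) * (x - 2) * (x - 3) / 24"
    "poly (binom_poly 3) x = x * (x - 1) * (x - 2) / 6"
    "poly (binom_poly 2) x = x * (x - 1) / 2"
    "poly (binom_poly 1) x = x"
    "poly (binom_poly 0) x = 1"
    by (simp_all add: binom_poly_def lessThan_nat_numeral fact_numeral field_simps)
  have "{1..5::nat} = {1, 2, 3, 4, 5}"
    by auto
  then have "poly (moser_poly 5 6) x = poly (binom_poly 4) x - 32 * poly (binom_poly 3) x
      + 243 * poly (binom_poly 2) x - 1024 * poly (binom_poly 1) x + 3125 * poly (binom_poly 0) x"
    by (simp add: poly_moser_poly)
  also have "\<dots> = (x ^ 4 - 134 * x ^ 3 + 3311 * x ^ 2 - 27754 * x + 75000) / 24"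
    unfolding binom by (simp add: field_simps) (simp add: algebra_simps eval_nat_numeral)
  also have "\<dots> = poly (moser6_closed_form 5) x"
    by (simp add: poly_moser6_closed_form moser_quartic_def fact_numeral field_simps)
      (simp add: algebra_simps eval_nat_numeral)
  finally show "poly (moser_poly 5 6) x = poly (moser6_closed_form 5) x" .
qed

lemma moser_poly_6_eq_closed_form: "s \<ge> 5 \<Longrightarrow> moser_poly s 6 = moser6_closed_form s"
proof (induction s rule: dec_induct)
  case base
  show ?case by (rule moser_poly_5_6)
next
  case (step s)
  have "moser_poly (Suc s) 6 - moser6_closed_form (Suc s) = 0"
  proof (rule poly_eq_0_if_periodic)
    fix x :: real
    show "poly (moser_poly (Suc s) 6 - moser6_closed_form (Suc s)) (x + 1) =
        poly (moser_poly (Suc s) 6 - moser6_closed_form (Suc s)) x"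
      using moser_poly_shift[of s 6 x] moser6_closed_form_shift[OF step.hyps(1), of x] step.IH
      by simp
  next
    show "poly (moser_poly (Suc s) 6 - moser6_closed_form (Suc s)) 0 = 0"
      using moser_poly_at_0[of "Suc s" 6] moser6_closed_form_at_0[of "Suc s"] step.hyps(1)
      by simp
  qed
  then show ?case
    by simp
qed

theorem mainTheorem9:
  fixes s :: nat
  assumes "s \<ge> 5"
  shows "moser_poly s 6 =
    smult (1 / fact (s - 1))
      ([: 120 * (of_nat s) ^ 4,
          - (240 * (of_nat s) ^ 3 - 90 * (of_nat s) ^ 2 + 4),
          150 * (of_nat s) ^ 2 - 90 * of_nat s + 11,
          - (30 * of_nat s - 16),
          1 :]
       * (\<Prod>p\<in>{6..s}. [:- of_nat p, 1:]))"
  using moser_poly_6_eq_closed_form[OF assms]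
  unfolding moser6_closed_form_def moser_quartic_def .

end
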